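(* Let $X$ be a $T_1$ topological space. (i) A nonzero ideal $I$ of $C_c(X)_F$ is minimal if and only if $I$ is generated by $\chi_{\{a\}}$ for some $a\in X$. (ii) A nonzero ideal $I$ of $C_c(X)_F$ is minimal if and only if $|Z[I]|=2$. (iii) The socle of $C_c(X)_F$ is the set of all $f\in C_c(X)_F$ such that $X\setminus Z(f)$ is finite. (iv) The socle of $C_c(X)_F$ is an essential ideal and $\bigcap_{f\in \mathrm{Soc}}Z(f)=\emptyset$.
   Context: $C_c(X)_F$ denotes the set of all functions $f:X\to\mathbb{R}$ whose range is countable and whose set of points of discontinuity is finite; it is a commutative ring with unity under pointwise operations. $Z(f)=\{x:f(x)=0\}$, $Z[I]=\{Z(f):f\in I\}$. $\chi_{\{a\}}$ is the function equal to $1$ at $a$ and $0$ elsewhere. The socle $\mathrm{Soc}$ of a commutative ring is the sum of all its minimal ideals. An ideal is essential if it meets every nonzero ideal nontrivially. *)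

theory Defs
  imports "HOL-Analysis.Analysis" "HOL-Algebra.Ideal"
begin

definition CcF :: "('a::topological_space \<Rightarrow> real) set" where
  "CcF = {f. countable (range f) \<and> finite {x. \<not> (f \<longlongrightarrow> f x) (at x)}}"

definition CcF_ring :: "('a::topological_space \<Rightarrow> real) ring" where
  "CcF_ring = \<lparr>carrier = CcF, monoid.mult = (\<lambda>f g x. f x * g x), one = (\<lambda>_. 1),
               zero = (\<lambda>_. 0), add = (\<lambda>f g x. f x + g x)\<rparr>"

definition Zset :: "('a \<Rightarrow> real) \<Rightarrow> 'a set" where
  "Zset f = {x. f x = 0}"

definition minimal_ideal :: "('b, 'c) ring_scheme \<Rightarrow> 'b set \<Rightarrow> bool" where
  "minimal_ideal R I \<longleftrightarrow> ideal I R \<and> I \<noteq> {\<zero>\<^bsub>R\<^esub>} \<and>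
     (\<forall>J. ideal J R \<and> J \<subseteq> I \<and> J \<noteq> {\<zero>\<^bsub>R\<^esub>} \<longrightarrow> J = I)"

definition socle :: "('b, 'c) ring_scheme \<Rightarrow> 'b set" where
  "socle R = Idl\<^bsub>R\<^esub> (\<Union>{I. minimal_ideal R I})"

definition essential_ideal :: "('b, 'c) ring_scheme \<Rightarrow> 'b set \<Rightarrow> bool" where
  "essential_ideal R I \<longleftrightarrow> ideal I R \<and>
     (\<forall>J. ideal J R \<and> J \<noteq> {\<zero>\<^bsub>R\<^esub>} \<longrightarrow> I \<inter> J \<noteq> {\<zero>\<^bsub>R\<^esub>})"

end

theory Submission
  imports Defs
begin

text \<open>In a \<open>T\<^sub>1\<close>-space finite sets are closed, so every finitely supported function
  lies in \<open>C\<^sub>c(X)\<^sub>F\<close>; in particular \<open>\<chi>\<^sub>{\<^sub>a\<^sub>}\<close> and its real multiples do. If an ideal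
  \<open>I\<close> contains \<open>f\<close> with \<open>f(a) \<noteq> 0\<close>, then \<open>(1/f(a)) \<chi>\<^sub>{\<^sub>a\<^sub>} \<cdot> f = \<chi>\<^sub>{\<^sub>a\<^sub>}\<close> lies in \<open>I\<close>;
  hence every nonzero ideal contains some ideal \<open>\<langle>\<chi>\<^sub>{\<^sub>a\<^sub>}\<rangle> = \<real> \<chi>\<^sub>{\<^sub>a\<^sub>}\<close>, and these are
  exactly the minimal ideals. Their zero sets are \<open>X\<close> and \<open>X \ {a}\<close>, whereas an ideal
  with nonzero values at two distinct points contains two indicators and so has at least
  three zero sets. The socle is therefore generated by all \<open>\<chi>\<^sub>{\<^sub>a\<^sub>}\<close>, i.e. it is the ideal
  of finitely supported functions, which meets every nonzero ideal and has no common zero.\<close>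

lemma CcF_binop_closed:
  fixes h :: "real \<Rightarrow> real \<Rightarrow> real" and f g :: "'a::topological_space \<Rightarrow> real"
  assumes h_tendsto: "\<And>(F :: 'a filter) u v l m.
      (u \<longlongrightarrow> l) F \<Longrightarrow> (v \<longlongrightarrow> m) F \<Longrightarrow> ((\<lambda>x. h (u x) (v x)) \<longlongrightarrow> h l m) F"
    and "f \<in> CcF" "g \<in> CcF"
  shows "(\<lambda>x. h (f x) (g x)) \<in> CcF"
proof -
  have "range (\<lambda>x. (f x, g x)) \<subseteq> range f \<times> range g"
    by auto
  then have "countable (range (\<lambda>x. (f x, g x)))"
    using assms(2,3) unfolding CcF_def by (blast intro: countable_subset countable_SIGMA)
  then have "countable (case_prod h ` range (\<lambda>x. (f x, g x)))"
    by (rule countable_image)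
  then have "countable (range (\<lambda>x. h (f x) (g x)))"
    by (simp add: image_image)
  moreover have "((\<lambda>x. h (f x) (g x)) \<longlongrightarrow> h (f x) (g x)) (at x)"
    if "(f \<longlongrightarrow> f x) (at x)" "(g \<longlongrightarrow> g x) (at x)" for x
    using h_tendsto[OF that] .
  then have "{x. \<not> ((\<lambda>x. h (f x) (g x)) \<longlongrightarrow> h (f x) (g x)) (at x)} \<subseteq>
      {x. \<not> (f \<longlongrightarrow> f x) (at x)} \<union> {x. \<not> (g \<longlongrightarrow> g x) (at x)}"
    by blast
  ultimately show ?thesis
    using assms(2,3) unfolding CcF_def by (auto intro: finite_subset)
qed

lemma CcF_const: "(\<lambda>_. c) \<in> CcF"
  unfolding CcF_def by auto

lemma CcF_add: "f \<in> CcF \<Longrightarrow> g \<in> CcF \<Longrightarrow> (\<lambda>x. f x + g x) \<in> CcF"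
  by (rule CcF_binop_closed) (rule tendsto_add)

lemma CcF_mult: "f \<in> CcF \<Longrightarrow> g \<in> CcF \<Longrightarrow> (\<lambda>x. f x * g x) \<in> CcF"
  by (rule CcF_binop_closed) (rule tendsto_mult)

lemma CcF_uminus: "f \<in> CcF \<Longrightarrow> (\<lambda>x. - f x) \<in> CcF"
  using CcF_mult[OF CcF_const[of "-1"]] by simp

lemma CcF_finite_support:
  fixes f :: "'a::t1_space \<Rightarrow> real"
  assumes fin: "finite {x. f x \<noteq> 0}"
  shows "f \<in> CcF"
proof -
  let ?S = "{x. f x \<noteq> 0}"
  have "range f \<subseteq> insert 0 (f ` ?S)"
    by auto
  then have "countable (range f)"
    using fin by (meson countable_finite finite_imageI finite_insert finite_subset)
  moreover have "(f \<longlongrightarrow> f x) (at x)" if "x \<notin> ?S" for x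
  proof -
    have "open (- ?S)"
      using finite_imp_closed[OF fin] by (simp add: open_Compl)
    then have "eventually (\<lambda>y. f y = 0) (at x)"
      using that unfolding eventually_at_topological by blast
    then show ?thesis
      using that by (simp add: tendsto_eventually)
  qed
  then have "{x. \<not> (f \<longlongrightarrow> f x) (at x)} \<subseteq> ?S"
    by blast
  ultimately show ?thesis
    using fin unfolding CcF_def by (auto intro: finite_subset)
qed

lemma CcF_ring_simps [simp]:
  "carrier CcF_ring = CcF"
  "f \<otimes>\<^bsub>CcF_ring\<^esub> g = (\<lambda>x. f x * g x)"
  "f \<oplus>\<^bsub>CcF_ring\<^esub> g = (\<lambda>x. f x + g x)"
  "\<zero>\<^bsub>CcF_ring\<^esub> = (\<lambda>_. 0)"
  "\<one>\<^bsub>CcF_ring\<^esub> = (\<lambda>_. 1)"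
  by (simp_all add: CcF_ring_def)

lemma cring_CcF_ring: "cring (CcF_ring :: ('a::topological_space \<Rightarrow> real) ring)"
proof (rule cringI)
  show "abelian_group (CcF_ring :: ('a \<Rightarrow> real) ring)"
  proof (rule abelian_groupI, simp_all add: CcF_add CcF_const)
    fix f :: "'a \<Rightarrow> real"
    assume "f \<in> CcF"
    then show "\<exists>g\<in>CcF. (\<lambda>x. g x + f x) = (\<lambda>_. 0)"
      by (intro bexI[of _ "\<lambda>x. - f x"]) (auto simp: CcF_uminus)
  qed (auto simp: algebra_simps)
  show "comm_monoid (CcF_ring :: ('a \<Rightarrow> real) ring)"
    by (rule comm_monoidI) (auto simp: CcF_mult CcF_const algebra_simps)
qed (auto simp: algebra_simps)

lemma a_inv_CcF_ring:
  assumes "f \<in> CcF"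
  shows "\<ominus>\<^bsub>(CcF_ring :: ('a::topological_space \<Rightarrow> real) ring)\<^esub> f = (\<lambda>x. - f x)"
proof -
  interpret cring "CcF_ring :: ('a \<Rightarrow> real) ring"
    by (rule cring_CcF_ring)
  show ?thesis
    by (rule minus_equality) (auto simp: assms CcF_uminus)
qed

lemma zero_in_ideal_CcF_ring: "ideal I CcF_ring \<Longrightarrow> (\<lambda>_. 0) \<in> I"
  using additive_subgroup.zero_closed[OF ideal.axioms(1), of I CcF_ring] by simp

lemma nonzero_ideal_CcF_ringE:
  assumes "ideal I CcF_ring" "I \<noteq> {\<zero>\<^bsub>CcF_ring\<^esub>}"
  obtains f a where "f \<in> I" "f a \<noteq> 0"
proof -
  obtain f where "f \<in> I" "f \<noteq> (\<lambda>_. 0)"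
    using assms zero_in_ideal_CcF_ring by auto
  moreover from \<open>f \<noteq> (\<lambda>_. 0)\<close> obtain a where "f a \<noteq> 0"
    by auto
  ultimately show ?thesis
    using that by blast
qed

subsection \<open>The ideals generated by the indicators of points\<close>

definition indicator_multiples :: "'a \<Rightarrow> ('a \<Rightarrow> real) set" where
  "indicator_multiples a = range (\<lambda>c x. c * indicator {a} x)"

lemma indicator_in_indicator_multiples: "indicator {a} \<in> indicator_multiples a"
  unfolding indicator_multiples_def by (rule image_eqI[where x = 1]) auto

lemma finite_support_indicator_multiple: "finite {x. c * (indicator {a} x :: real) \<noteq> 0}"
  by (rule finite_subset[of _ "{a}"]) (auto simp: indicator_def)

lemma indicator_multiples_finite_support:
  "indicator_multiples a \<subseteq> {f. finite {x. f x \<noteq> 0}}"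
proof
  fix f
  assume "f \<in> indicator_multiples a"
  then obtain c where "f = (\<lambda>x. c * indicator {a} x)"
    by (auto simp: indicator_multiples_def)
  then show "f \<in> {f. finite {x. f x \<noteq> 0}}"
    using finite_support_indicator_multiple[of c a] by simp
qed

lemma finite_support_indicator: "finite {x. (indicator {a} x :: real) \<noteq> 0}"
  using finite_support_indicator_multiple[of 1 a] by simp

lemma indicator_multiples_CcF:
  "(\<lambda>x. c * indicator {a} x) \<in> (CcF :: ('a::t1_space \<Rightarrow> real) set)"
  by (rule CcF_finite_support[OF finite_support_indicator_multiple])

lemma indicator_singleton_CcF: "(indicator {a} :: 'a::t1_space \<Rightarrow> real) \<in> CcF"
  using indicator_multiples_CcF[of 1 a] by simp

lemma indicator_in_ideal_CcF_ring:
  fixes I :: "('a::t1_space \<Rightarrow> real) set"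
  assumes I: "ideal I CcF_ring" and "f \<in> I" "f a \<noteq> 0"
  shows "indicator {a} \<in> I"
proof -
  have "(\<lambda>x. inverse (f a) * indicator {a} x) \<otimes>\<^bsub>CcF_ring\<^esub> f \<in> I"
    by (rule ideal.I_l_closed[OF I \<open>f \<in> I\<close>]) (simp add: indicator_multiples_CcF)
  moreover have "(\<lambda>x. inverse (f a) * indicator {a} x) \<otimes>\<^bsub>CcF_ring\<^esub> f = indicator {a}"
    using \<open>f a \<noteq> 0\<close> by (auto simp: indicator_def)
  ultimately show ?thesis
    by simp
qed

lemma indicator_multiples_subset_ideal:
  fixes I :: "('a::t1_space \<Rightarrow> real) set"
  assumes I: "ideal I CcF_ring" and "indicator {a} \<in> I"
  shows "indicator_multiples a \<subseteq> I"
proof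
  fix g
  assume "g \<in> indicator_multiples a"
  then obtain c where g: "g = (\<lambda>x. c * indicator {a} x)"
    by (auto simp: indicator_multiples_def)
  have "(\<lambda>_. c) \<otimes>\<^bsub>CcF_ring\<^esub> indicator {a} \<in> I"
    by (rule ideal.I_l_closed[OF I \<open>indicator {a} \<in> I\<close>]) (simp add: CcF_const)
  then show "g \<in> I"
    using g by simp
qed

lemma genideal_indicator_singleton:
  "Idl\<^bsub>(CcF_ring :: ('a::t1_space \<Rightarrow> real) ring)\<^esub> {indicator {a}} = indicator_multiples a"
proof -
  let ?R = "CcF_ring :: ('a \<Rightarrow> real) ring"
  interpret cring ?R
    by (rule cring_CcF_ring)
  have "PIdl\<^bsub>?R\<^esub> (indicator {a}) \<subseteq> indicator_multiples a"
  proof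
    fix g
    assume "g \<in> PIdl\<^bsub>?R\<^esub> (indicator {a})"
    then obtain h where "g = (\<lambda>x. h x * indicator {a} x)"
      by (auto simp: cgenideal_def)
    then have "g = (\<lambda>x. h a * indicator {a} x)"
      by (auto simp: indicator_def)
    then show "g \<in> indicator_multiples a"
      by (auto simp: indicator_multiples_def)
  qed
  moreover have "indicator_multiples a \<subseteq> PIdl\<^bsub>?R\<^esub> (indicator {a})"
    by (rule indicator_multiples_subset_ideal[OF cgenideal_ideal cgenideal_self])
      (simp_all add: indicator_singleton_CcF)
  ultimately show ?thesis
    using cgenideal_eq_genideal[of "indicator {a}"] by (simp add: indicator_singleton_CcF)
qed

lemma ideal_indicator_multiples:
  "ideal (indicator_multiples a) (CcF_ring :: ('a::t1_space \<Rightarrow> real) ring)"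
proof -
  interpret cring "CcF_ring :: ('a \<Rightarrow> real) ring"
    by (rule cring_CcF_ring)
  show ?thesis
    using genideal_ideal[of "{indicator {a}}"]
    by (simp add: indicator_singleton_CcF genideal_indicator_singleton)
qed

lemma indicator_singleton_nonzero: "(indicator {a} :: 'a \<Rightarrow> real) \<noteq> (\<lambda>_. 0)"
  by (metis indicator_simps(1) insertI1 zero_neq_one)

lemma indicator_multiples_nonzero:
  "indicator_multiples a \<noteq> {\<zero>\<^bsub>(CcF_ring :: ('a::t1_space \<Rightarrow> real) ring)\<^esub>}"
  using indicator_in_indicator_multiples[of a] indicator_singleton_nonzero[of a] by auto

lemma minimal_ideal_indicator_multiples:
  "minimal_ideal (CcF_ring :: ('a::t1_space \<Rightarrow> real) ring) (indicator_multiples a)"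
  unfolding minimal_ideal_def
proof (intro conjI allI impI ideal_indicator_multiples indicator_multiples_nonzero)
  fix J :: "('a \<Rightarrow> real) set"
  assume J: "ideal J CcF_ring \<and> J \<subseteq> indicator_multiples a \<and> J \<noteq> {\<zero>\<^bsub>CcF_ring\<^esub>}"
  then obtain g b where "g \<in> J" "g b \<noteq> 0"
    by (meson nonzero_ideal_CcF_ringE)
  moreover have "b = a"
  proof -
    obtain c where "g = (\<lambda>x. c * indicator {a} x)"
      using \<open>g \<in> J\<close> J by (auto simp: indicator_multiples_def)
    then show ?thesis
      using \<open>g b \<noteq> 0\<close> by (auto simp: indicator_def split: if_splits)
  qed
  ultimately have "indicator {a} \<in> J"
    using J indicator_in_ideal_CcF_ring by blast
  then show "J = indicator_multiples a"
    using J indicator_multiples_subset_ideal by blast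
qed

lemma minimal_ideal_CcF_ring_iff:
  fixes I :: "('a::t1_space \<Rightarrow> real) set"
  assumes I: "ideal I CcF_ring" "I \<noteq> {\<zero>\<^bsub>CcF_ring\<^esub>}"
  shows "minimal_ideal CcF_ring I \<longleftrightarrow> (\<exists>a. I = indicator_multiples a)"
proof
  assume min: "minimal_ideal CcF_ring I"
  obtain f a where "f \<in> I" "f a \<noteq> 0"
    using nonzero_ideal_CcF_ringE[OF I] .
  then have "indicator_multiples a \<subseteq> I"
    using I indicator_in_ideal_CcF_ring indicator_multiples_subset_ideal by blast
  then show "\<exists>a. I = indicator_multiples a"
    using min ideal_indicator_multiples indicator_multiples_nonzero
    unfolding minimal_ideal_def by blast
qed (use minimal_ideal_indicator_multiples in blast)

lemma Zset_indicator_singleton: "Zset (indicator {a} :: 'a \<Rightarrow> real) = - {a}"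
  by (auto simp: Zset_def indicator_def)

lemma Zset_image_indicator_multiples: "Zset ` indicator_multiples a = {UNIV, - {a}}"
proof -
  have "Zset (\<lambda>x. c * indicator {a} x) = (if c = 0 then UNIV else - {a})" for c :: real
    by (auto simp: Zset_def indicator_def)
  then have "Zset ` indicator_multiples a = (\<lambda>c::real. if c = 0 then UNIV else - {a}) ` UNIV"
    unfolding indicator_multiples_def by (simp add: image_image)
  also have "\<dots> = {UNIV, - {a}}"
    by (auto simp: image_def intro: exI[of _ "0::real"] exI[of _ "1::real"])
  finally show ?thesis .
qed

lemma card_UNIV_Compl_singleton: "card {UNIV, - {a}} = 2"
proof -
  have "UNIV \<noteq> - {a}"
    by auto
  then show ?thesis
    by simp
qed

lemma card_Zset_image_eq_2_iff:
  fixes I :: "('a::t1_space \<Rightarrow> real) set"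
  assumes I: "ideal I CcF_ring" "I \<noteq> {\<zero>\<^bsub>CcF_ring\<^esub>}"
  shows "card (Zset ` I) = 2 \<longleftrightarrow> (\<exists>a. I = indicator_multiples a)"
proof
  assume card: "card (Zset ` I) = 2"
  obtain f a where "f \<in> I" "f a \<noteq> 0"
    using nonzero_ideal_CcF_ringE[OF I] .
  then have "indicator {a} \<in> I"
    using I indicator_in_ideal_CcF_ring by blast
  moreover have "Zset (\<lambda>_. 0 :: real) = UNIV"
    by (simp add: Zset_def)
  ultimately have "{UNIV, - {a}} \<subseteq> Zset ` I"
    using zero_in_ideal_CcF_ring[OF I(1)] Zset_indicator_singleton[of a]
    by (metis empty_subsetI image_eqI insert_subset)
  then have Zsets: "Zset ` I = {UNIV, - {a}}"
    using card card_UNIV_Compl_singleton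
    by (metis card_subset_eq card.infinite zero_neq_numeral)
  have "I \<subseteq> indicator_multiples a"
  proof
    fix g
    assume "g \<in> I"
    then have "- {a} \<subseteq> Zset g"
      using Zsets by blast
    then have "g = (\<lambda>x. g a * indicator {a} x)"
      by (intro ext) (auto simp: Zset_def indicator_def)
    then show "g \<in> indicator_multiples a"
      unfolding indicator_multiples_def by (rule range_eqI)
  qed
  then show "\<exists>a. I = indicator_multiples a"
    using indicator_multiples_subset_ideal[OF I(1) \<open>indicator {a} \<in> I\<close>] by blast
qed (auto simp: Zset_image_indicator_multiples card_UNIV_Compl_singleton)

subsection \<open>The socle\<close>

lemma ideal_finite_support:
  "ideal {f. finite {x. f x \<noteq> 0}} (CcF_ring :: ('a::t1_space \<Rightarrow> real) ring)"
proof -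
  let ?R = "CcF_ring :: ('a \<Rightarrow> real) ring"
  let ?FS = "{f :: 'a \<Rightarrow> real. finite {x. f x \<noteq> 0}}"
  interpret cring ?R
    by (rule cring_CcF_ring)
  show ?thesis
  proof (rule idealI[OF ring_axioms])
    show "subgroup ?FS (add_monoid ?R)"
    proof
      show "?FS \<subseteq> carrier (add_monoid ?R)"
        by (auto simp: CcF_finite_support)
      show "\<one>\<^bsub>add_monoid ?R\<^esub> \<in> ?FS"
        by simp
      fix f g
      assume f: "f \<in> ?FS" and g: "g \<in> ?FS"
      have "{x. f x + g x \<noteq> 0} \<subseteq> {x. f x \<noteq> 0} \<union> {x. g x \<noteq> 0}"
        by auto
      then show "f \<otimes>\<^bsub>add_monoid ?R\<^esub> g \<in> ?FS"
        using f g by (auto intro: finite_subset)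
      show "inv\<^bsub>add_monoid ?R\<^esub> f \<in> ?FS"
        using f a_inv_CcF_ring[OF CcF_finite_support, of f] by (simp add: a_inv_def)
    qed
  next
    fix f g :: "'a \<Rightarrow> real"
    assume "f \<in> ?FS"
    moreover have "{x. g x * f x \<noteq> 0} \<subseteq> {x. f x \<noteq> 0}" "{x. f x * g x \<noteq> 0} \<subseteq> {x. f x \<noteq> 0}"
      by auto
    ultimately show "g \<otimes>\<^bsub>?R\<^esub> f \<in> ?FS" "f \<otimes>\<^bsub>?R\<^esub> g \<in> ?FS"
      by (auto intro: finite_subset)
  qed
qed

lemma finite_support_in_ideal:
  fixes J :: "('a::t1_space \<Rightarrow> real) set"
  assumes J: "ideal J CcF_ring" "\<And>b. indicator {b} \<in> J"
    and fin: "finite {x. f x \<noteq> 0}"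
  shows "f \<in> J"
proof -
  have "f \<in> J" if "finite T" "{x. f x \<noteq> 0} \<subseteq> T" for T f
    using that
  proof (induction T arbitrary: f rule: finite_induct)
    case empty
    then have "f = (\<lambda>_. 0)"
      by auto
    then show ?case
      using zero_in_ideal_CcF_ring[OF J(1)] by simp
  next
    case (insert a T)
    define g where "g = f(a := 0)"
    have "g \<in> J"
      using insert by (intro insert.IH) (auto simp: g_def)
    have "(\<lambda>x. f a * indicator {a} x) \<in> J"
      using indicator_multiples_subset_ideal[OF J] by (auto simp: indicator_multiples_def)
    then have "(\<lambda>x. f a * indicator {a} x) \<oplus>\<^bsub>CcF_ring\<^esub> g \<in> J"
      using \<open>g \<in> J\<close> by (rule additive_subgroup.a_closed[OF ideal.axioms(1)[OF J(1)]])
    moreover have "(\<lambda>x. f a * indicator {a} x) \<oplus>\<^bsub>CcF_ring\<^esub> g = f"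
      by (auto simp: g_def indicator_def)
    ultimately show ?case
      by simp
  qed
  then show ?thesis
    using fin by blast
qed

lemma minimal_ideals_CcF_ring:
  "{I. minimal_ideal (CcF_ring :: ('a::t1_space \<Rightarrow> real) ring) I} = range indicator_multiples"
proof (intro equalityI subsetI)
  fix I :: "('a \<Rightarrow> real) set"
  assume "I \<in> {I. minimal_ideal CcF_ring I}"
  then have "minimal_ideal CcF_ring I" "ideal I CcF_ring" "I \<noteq> {\<zero>\<^bsub>CcF_ring\<^esub>}"
    by (simp_all add: minimal_ideal_def)
  then show "I \<in> range indicator_multiples"
    using minimal_ideal_CcF_ring_iff by blast
qed (auto simp: minimal_ideal_indicator_multiples)

lemma socle_CcF_ring:
  "socle (CcF_ring :: ('a::t1_space \<Rightarrow> real) ring) = {f. finite {x. f x \<noteq> 0}}"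
proof -
  let ?R = "CcF_ring :: ('a \<Rightarrow> real) ring"
  let ?FS = "{f :: 'a \<Rightarrow> real. finite {x. f x \<noteq> 0}}"
  interpret cring ?R
    by (rule cring_CcF_ring)
  have gens: "\<Union>(range indicator_multiples) \<subseteq> ?FS"
    by (intro UN_least indicator_multiples_finite_support)
  then have gens_carrier: "\<Union>(range indicator_multiples) \<subseteq> carrier ?R"
    by (auto simp: CcF_finite_support)
  have socle: "socle ?R = Idl\<^bsub>?R\<^esub> (\<Union>(range indicator_multiples))"
    unfolding socle_def minimal_ideals_CcF_ring ..
  have "indicator {b} \<in> Idl\<^bsub>?R\<^esub> (\<Union>(range indicator_multiples))" for b
    using genideal_self[OF gens_carrier] indicator_in_indicator_multiples[of b] by blast
  then have "?FS \<subseteq> socle ?R"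
    unfolding socle using finite_support_in_ideal[OF genideal_ideal[OF gens_carrier]] by blast
  moreover have "socle ?R \<subseteq> ?FS"
    unfolding socle by (rule genideal_minimal[OF ideal_finite_support gens])
  ultimately show ?thesis
    by blast
qed

lemma essential_socle_CcF_ring:
  "essential_ideal (CcF_ring :: ('a::t1_space \<Rightarrow> real) ring) (socle CcF_ring)"
  unfolding essential_ideal_def socle_CcF_ring
proof (intro conjI allI impI ideal_finite_support)
  fix J :: "('a \<Rightarrow> real) set"
  assume J: "ideal J CcF_ring \<and> J \<noteq> {\<zero>\<^bsub>CcF_ring\<^esub>}"
  then obtain f a where "f \<in> J" "f a \<noteq> 0"
    by (meson nonzero_ideal_CcF_ringE)
  then have "indicator {a} \<in> J"
    using J indicator_in_ideal_CcF_ring by blast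
  then show "{f. finite {x. f x \<noteq> 0}} \<inter> J \<noteq> {\<zero>\<^bsub>CcF_ring\<^esub>}"
    using finite_support_indicator[of a] indicator_singleton_nonzero[of a] by auto
qed

lemma Inter_Zset_socle_CcF_ring:
  "(\<Inter>f\<in>socle (CcF_ring :: ('a::t1_space \<Rightarrow> real) ring). Zset f) = {}"
proof -
  have "indicator {x} \<in> socle (CcF_ring :: ('a \<Rightarrow> real) ring)" for x
    unfolding socle_CcF_ring using finite_support_indicator[of x] by simp
  then show ?thesis
    by (force simp: Zset_indicator_singleton)
qed

theorem proposition3p16:
  fixes R :: "('a::t1_space \<Rightarrow> real) ring"
  defines "R \<equiv> CcF_ring"
  shows "(\<forall>I. ideal I R \<and> I \<noteq> {\<zero>\<^bsub>R\<^esub>} \<longrightarrow>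
            (minimal_ideal R I \<longleftrightarrow> (\<exists>a. I = Idl\<^bsub>R\<^esub> {indicator {a}})))
       \<and> (\<forall>I. ideal I R \<and> I \<noteq> {\<zero>\<^bsub>R\<^esub>} \<longrightarrow>
            (minimal_ideal R I \<longleftrightarrow> card (Zset ` I) = 2))
       \<and> socle R = {f \<in> CcF. finite (UNIV - Zset f)}
       \<and> essential_ideal R (socle R)
       \<and> (\<Inter>f\<in>socle R. Zset f) = {}"
  unfolding R_def
proof (intro conjI allI impI)
  fix I :: "('a \<Rightarrow> real) set"
  assume I: "ideal I CcF_ring \<and> I \<noteq> {\<zero>\<^bsub>CcF_ring\<^esub>}"
  then show "minimal_ideal CcF_ring I \<longleftrightarrow> (\<exists>a. I = Idl\<^bsub>CcF_ring\<^esub> {indicator {a}})"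
    by (simp add: minimal_ideal_CcF_ring_iff genideal_indicator_singleton)
  from I show "minimal_ideal CcF_ring I \<longleftrightarrow> card (Zset ` I) = 2"
    by (simp add: minimal_ideal_CcF_ring_iff card_Zset_image_eq_2_iff)
next
  show "socle CcF_ring = {f \<in> CcF. finite (UNIV - Zset (f :: 'a \<Rightarrow> real))}"
    by (auto simp: socle_CcF_ring Zset_def set_diff_eq CcF_finite_support)
qed (fact essential_socle_CcF_ring Inter_Zset_socle_CcF_ring)+

end
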